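(* Let $k\in\mathbb{R}$, $T$ large, and suppose $t\in\mathcal{S}$. Let $W_0=20|k|V_0$. Then as $X\to\infty$, \[ P_X(\tfrac12+it)^k=\big(1+O(e^{-19|k|V_0})\big)D(t,k), \] where $D(t,k)=\sum_{n\in S(X)}\alpha_k(n)n^{-1/2-it}$ and the coefficients $\alpha_k(n)$ satisfy: (i) $\alpha_k(n)$ is supported on integers $n\leqslant X^{W_0}$ and $|\alpha_k(n)|\leqslant d_{|k|}(n)$; (ii) there is a multiplicative function $\beta_k$ such that $\alpha_k(n)=\beta_k(n)$ whenever $\Omega(n)\leqslant W_0$, with $\beta_k(n)=d_k(n)$ whenever every prime power $p^m$ dividing $n$ satisfies $p^m\leqslant X$, and $|\beta_k(n)|\leqslant d_{|k|}(n)$ for all $n$.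
   Context: $\Lambda$ is the von Mangoldt function and $P_X(s)=\exp\big(\sum_{n\leqslant X}\frac{\Lambda(n)}{n^s\log n}\big)$. Let $F(t)=\sum_{n\leqslant X}\frac{\Lambda(n)}{n^{1/2+it}\log n}$, $V_0=(\log\log T)(\log\log\log T)$ and $\mathcal{S}=\{t\in[T,2T]:|\Re F(t)|\leqslant V_0,\ |\Im F(t)|\leqslant V_0\}$. The Dirichlet polynomial $D(t,k)$ is the truncated exponential series $\sum_{0\leqslant j\leqslant W_0}\frac{k^j}{j!}F(t)^j$, and $\alpha_k(n)$ are its coefficients when written as $\sum_n\alpha_k(n)n^{-1/2-it}$. $S(X)$ is the set of positive integers all of whose prime factors are $\leqslant X$. $\Omega(n)$ is the number of prime factors of $n$ counted with multiplicity. For real $k$, $d_k(n)$ is the multiplicative function with $\sum_nd_k(n)n^{-s}=\zeta(s)^k$. *)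

theory Defs
  imports "HOL-Analysis.Analysis" "HOL-Number_Theory.Number_Theory"
begin

definition mangoldt :: "nat \<Rightarrow> real" where
  "mangoldt n = (if primepow n then ln (real (aprimedivisor n)) else 0)"

definition bigOmega :: "nat \<Rightarrow> nat" where
  "bigOmega n = size (prime_factorization n)"

text \<open>Generalised divisor function d_k for real k: multiplicative, with
  d_k(p^m) = k(k+1)...(k+m-1)/m!, i.e. the coefficients of zeta(s)^k.\<close>
definition dk :: "real \<Rightarrow> nat \<Rightarrow> real" where
  "dk k n = (\<Prod>p\<in>prime_factors n. pochhammer k (multiplicity p n) / fact (multiplicity p n))"

definition multiplicative_fun :: "(nat \<Rightarrow> real) \<Rightarrow> bool" where
  "multiplicative_fun f \<longleftrightarrow> f 1 = 1 \<and> (\<forall>m n. m > 0 \<longrightarrow> n > 0 \<longrightarrow> coprime m n \<longrightarrow> f (m * n) = f m * f n)"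

definition smooth_set :: "real \<Rightarrow> nat set" where
  "smooth_set X = {n. n > 0 \<and> (\<forall>p\<in>prime_factors n. real p \<le> X)}"

definition Fpoly :: "real \<Rightarrow> real \<Rightarrow> complex" where
  "Fpoly X t = (\<Sum>n\<in>{2..nat \<lfloor>X\<rfloor>}. complex_of_real (mangoldt n / ln (real n)) *
                  (of_nat n) powr (- (1/2 + \<i> * complex_of_real t)))"

definition PXpow :: "real \<Rightarrow> real \<Rightarrow> complex \<Rightarrow> complex" where
  "PXpow X k s = exp (complex_of_real k * (\<Sum>n\<in>{2..nat \<lfloor>X\<rfloor>}.
       complex_of_real (mangoldt n / ln (real n)) * (of_nat n) powr (- s)))"

definition V0 :: "real \<Rightarrow> real" where
  "V0 T = ln (ln T) * ln (ln (ln T))"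

definition W0 :: "real \<Rightarrow> real \<Rightarrow> real" where
  "W0 k T = 20 * \<bar>k\<bar> * V0 T"

definition Sset :: "real \<Rightarrow> real \<Rightarrow> real set" where
  "Sset X T = {t. T \<le> t \<and> t \<le> 2 * T \<and> \<bar>Re (Fpoly X t)\<bar> \<le> V0 T \<and> \<bar>Im (Fpoly X t)\<bar> \<le> V0 T}"

definition Dpoly :: "real \<Rightarrow> real \<Rightarrow> real \<Rightarrow> real \<Rightarrow> complex" where
  "Dpoly X k T t = (\<Sum>j\<in>{j::nat. real j \<le> W0 k T}.
       complex_of_real (k ^ j / fact j) * Fpoly X t ^ j)"

text \<open>Dirichlet-convolution powers of the coefficient function
  b(n) = Lambda(n)/log n * [n <= X]; apow X j n is the n-th coefficient of F^j.\<close>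
fun apow :: "real \<Rightarrow> nat \<Rightarrow> nat \<Rightarrow> real" where
  "apow X 0 n = (if n = 1 then 1 else 0)"
| "apow X (Suc j) n = (\<Sum>d\<in>{d. d dvd n}.
      (if 2 \<le> d \<and> real d \<le> X then mangoldt d / ln (real d) else 0) * apow X j (n div d))"

text \<open>alpha_k(n): coefficients of D(t,k) = sum_n alpha_k(n) n^{-1/2-it}\<close>
definition alpha :: "real \<Rightarrow> real \<Rightarrow> real \<Rightarrow> nat \<Rightarrow> real" where
  "alpha X k T n = (\<Sum>j\<in>{j::nat. real j \<le> W0 k T}. k ^ j / fact j * apow X j n)"

end

theory Submission
  imports Defs "HOL-Computational_Algebra.Formal_Power_Series"
begin

text \<open>
  P_X(1/2 + it)^k = exp (k F(t)) and D(t,k) is the exponential series of k F(t) truncated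
  after the terms with j <= W_0 = 20|k|V_0. On S we have |k F(t)| <= 2|k|V_0, so the tail is
  at most exp(-25|k|V_0), while |exp (k F(t))| >= exp(-2|k|V_0); the quotient is the error.

  Writing F = sum_n b(n) n^(-s), the n-th coefficient of F^j is apow X j n, so
  alpha_k(n) = sum_(j <= W_0) k^j/j! apow X j n. Since b lives on prime powers, apow X j n
  vanishes for j > Omega(n), so alpha_k(n) equals the full series
  beta_k(n) = sum_j k^j/j! apow X j n once Omega(n) <= W_0. For fixed n the exponential
  generating function sum_j apow X j n x^j/j! satisfies a Leibniz rule which makes it
  multiplicative in n, hence so is beta_k. At a prime power p^m <= X, b(p^i) = 1/i, so
  beta_k(p^m) is the m-th coefficient of exp (k (-log (1 - x))) = (1 - x)^(-k), which is
  d_k(p^m). Finally apow is nonnegative and increasing in X, so alpha_k(n) and beta_k(n)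
  are bounded in absolute value by beta_|k|(n) computed with X >= n, that is by d_|k|(n).
\<close>

unbundle no vec_syntax
notation fps_nth (infixl \<open>$\<close> 75)

lemma nat_set_le_eq_lessThan:
  fixes x :: real
  assumes "x \<ge> 0"
  shows "{j::nat. real j \<le> x} = {..<nat \<lfloor>x\<rfloor> + 1}"
  using assms by (auto simp: le_nat_floor less_Suc_eq_le le_nat_iff le_floor_iff)

lemma finite_nat_set_le: "finite {j::nat. real j \<le> x}"
  by (rule finite_subset[of _ "{..nat \<lceil>x\<rceil>}"]) (auto, linarith)

lemma finite_smooth_set_le: "finite {n \<in> smooth_set X. real n \<le> Y}"
  by (rule finite_subset[of _ "{..nat \<lceil>Y\<rceil>}"]) (auto, linarith)

lemma V0_ge:
  assumes "B \<ge> 1" "T \<ge> exp (exp (exp B))"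
  shows "V0 T \<ge> B"
proof -
  have pos: "0 < y" if "exp x \<le> y" for x y :: real
    using that exp_gt_zero less_le_trans by blast
  have "exp (exp B) \<le> ln T"
    using assms(2) ln_ge_iff[OF pos] by blast
  then have lnlnT: "exp B \<le> ln (ln T)"
    using ln_ge_iff[OF pos] by blast
  then have "B \<le> ln (ln (ln T))"
    using ln_ge_iff[OF pos] by blast
  moreover have "1 \<le> ln (ln T)"
    using lnlnT assms(1) one_le_exp_iff[of B] by linarith
  ultimately show ?thesis
    unfolding V0_def using mult_mono[of 1 "ln (ln T)" B "ln (ln (ln T))"] assms(1) by simp
qed

lemma mangoldt_eq_Prime_Powers_mangoldt: "Defs.mangoldt n = (Prime_Powers.mangoldt n :: real)"
  by (simp add: Defs.mangoldt_def Prime_Powers.mangoldt_def)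

lemma bigOmega_mult: "a > 0 \<Longrightarrow> b > 0 \<Longrightarrow> bigOmega (a * b) = bigOmega a + bigOmega b"
  by (simp add: bigOmega_def prime_factorization_mult)

lemma bigOmega_1 [simp]: "bigOmega 1 = 0"
  by (simp add: bigOmega_def)

lemma bigOmega_ge_1: "d \<ge> 2 \<Longrightarrow> bigOmega d \<ge> 1"
  by (simp add: bigOmega_def Suc_le_eq nonempty_has_size[symmetric] prime_factorization_empty_iff)

lemma bigOmega_prime_power: "prime p \<Longrightarrow> bigOmega (p ^ m) = m"
  by (simp add: bigOmega_def prime_factorization_prime_power)


section \<open>Divisor sums and multiplicative functions\<close>

lemma primepow_dvd_mult_coprimeD:
  fixes d m1 m2 :: nat
  assumes "primepow d" "d dvd m1 * m2" "coprime m1 m2"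
  shows "d dvd m1 \<or> d dvd m2"
proof -
  obtain p i where p: "prime p" "i > 0" "d = p ^ i"
    using assms(1) by (auto simp: primepow_def)
  then have "coprime p m1 \<or> coprime p m2"
    using assms(3) by (metis coprime_common_divisor not_prime_unit prime_imp_coprime)
  then have "coprime d m1 \<or> coprime d m2"
    using p by simp
  then show ?thesis
    using assms(2) coprime_dvd_mult_left_iff coprime_dvd_mult_right_iff by blast
qed

lemma sum_divisors_mult_coprime:
  fixes g :: "nat \<Rightarrow> 'a::comm_monoid_add"
  assumes "coprime m1 m2" "m1 > 0" "m2 > 0" "\<And>d. \<not> primepow d \<Longrightarrow> g d = 0"
  shows "(\<Sum>d | d dvd m1 * m2. g d) = (\<Sum>d | d dvd m1. g d) + (\<Sum>d | d dvd m2. g d)"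
proof -
  let ?D = "{d. d dvd m1 * m2}" and ?D1 = "{d. d dvd m1}" and ?D2 = "{d. d dvd m2}"
  have fin: "finite ?D1" "finite ?D2"
    using assms by auto
  have "sum g ?D = sum g (?D1 \<union> ?D2)"
    using assms primepow_dvd_mult_coprimeD[OF _ _ assms(1)]
    by (intro sum.mono_neutral_right) auto
  moreover have "sum g (?D1 \<union> ?D2) + sum g (?D1 \<inter> ?D2) = sum g ?D1 + sum g ?D2"
    by (rule sum.union_inter[OF fin])
  moreover have "?D1 \<inter> ?D2 = {1}"
    using assms(1) by (auto dest: coprime_common_divisor)
  ultimately show ?thesis
    using assms(4)[of 1] by simp
qed

lemma multiplicative_fun_prod:
  assumes "multiplicative_fun f" "finite A" "\<forall>p\<in>A. prime p"
  shows "f (\<Prod>p\<in>A. p ^ e p) = (\<Prod>p\<in>A. f (p ^ e p))"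
  using assms(2,3)
proof (induction A rule: finite_induct)
  case empty
  then show ?case
    using assms(1) by (simp add: multiplicative_fun_def)
next
  case (insert q A)
  have "coprime q p" if "p \<in> A" for p
    using insert that by (intro primes_coprime) auto
  then have "coprime (q ^ e q) (\<Prod>p\<in>A. p ^ e p)"
    by (intro prod_coprime_right) auto
  moreover have "q ^ e q > 0" "(\<Prod>p\<in>A. p ^ e p) > 0"
    using insert by (auto simp: prime_gt_0_nat)
  ultimately show ?case
    using insert assms(1) by (simp add: multiplicative_fun_def)
qed

lemma multiplicative_fun_eq_prod_prime_factors:
  assumes "multiplicative_fun f" "n > 0"
  shows "f n = (\<Prod>p\<in>prime_factors n. f (p ^ multiplicity p n))"
proof -
  have "f n = f (\<Prod>p\<in>prime_factors n. p ^ multiplicity p n)"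
    using prod_prime_factors[of n] assms(2) by simp
  also have "\<dots> = (\<Prod>p\<in>prime_factors n. f (p ^ multiplicity p n))"
    using assms(1) by (rule multiplicative_fun_prod) auto
  finally show ?thesis .
qed

lemma of_nat_mult_powr: "(of_nat (m * n) :: complex) powr z = of_nat m powr z * of_nat n powr z"
  using powr_times_real[of "of_nat m" "of_nat n" z] by simp

lemma sum_divisors_eq_sum_pairs:
  fixes h :: "nat \<Rightarrow> nat \<Rightarrow> 'a::comm_monoid_add"
  shows "(\<Sum>N\<in>{1..M}. \<Sum>d | d dvd N. h d (N div d)) =
    (\<Sum>(d, m)\<in>{(d, m). 0 < d * m \<and> d * m \<le> M}. h d m)"
proof -
  have "(\<Sum>N\<in>{1..M}. \<Sum>d | d dvd N. h d (N div d)) =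
      (\<Sum>(N, d)\<in>(SIGMA N:{1..M}. {d. d dvd N}). h d (N div d))"
    by (rule sum.Sigma) auto
  also have "\<dots> = (\<Sum>(d, m)\<in>{(d, m). 0 < d * m \<and> d * m \<le> M}. h d m)"
    by (rule sum.reindex_bij_witness[of _ "\<lambda>(d, m). (d * m, d)" "\<lambda>(N, d). (d, N div d)"])
      (auto simp: Suc_le_eq)
  finally show ?thesis .
qed

lemma dirichlet_poly_mult:
  fixes f g :: "nat \<Rightarrow> complex"
  assumes "\<And>d. d > A \<Longrightarrow> f d = 0" "\<And>m. m > B \<Longrightarrow> g m = 0"
  shows "(\<Sum>d\<in>{1..A}. f d * of_nat d powr z) * (\<Sum>m\<in>{1..B}. g m * of_nat m powr z) =
    (\<Sum>N\<in>{1..A * B}. (\<Sum>d | d dvd N. f d * g (N div d)) * of_nat N powr z)"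
proof -
  let ?h = "\<lambda>d m. f d * g m * of_nat (d * m) powr z"
  let ?P = "{(d, m). 0 < d * m \<and> d * m \<le> A * B}"
  have "finite ?P"
    by (rule finite_subset[of _ "{..A * B} \<times> {..A * B}"])
      (auto, (metis dual_order.trans mult.commute mult_le_mono1 mult_1 Suc_leI One_nat_def)+)
  have "(\<Sum>d\<in>{1..A}. f d * of_nat d powr z) * (\<Sum>m\<in>{1..B}. g m * of_nat m powr z) =
      (\<Sum>(d, m)\<in>{1..A} \<times> {1..B}. ?h d m)"
    by (simp add: sum_product sum.cartesian_product of_nat_mult_powr mult_ac del: of_nat_mult)
  also have "\<dots> = (\<Sum>(d, m)\<in>?P. ?h d m)"
  proof (rule sum.mono_neutral_left[OF \<open>finite ?P\<close>])
    show "{1..A} \<times> {1..B} \<subseteq> ?P"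
      by (auto simp: mult_le_mono)
    show "\<forall>i\<in>?P - {1..A} \<times> {1..B}. (case i of (d, m) \<Rightarrow> ?h d m) = 0"
    proof
      fix i assume i: "i \<in> ?P - {1..A} \<times> {1..B}"
      obtain d m where [simp]: "i = (d, m)"
        by (cases i)
      from i have "d > A \<or> m > B"
        by auto
      then show "(case i of (d, m) \<Rightarrow> ?h d m) = 0"
        using assms by auto
    qed
  qed
  also have "\<dots> = (\<Sum>N\<in>{1..A * B}. \<Sum>d | d dvd N. ?h d (N div d))"
    by (rule sum_divisors_eq_sum_pairs[symmetric])
  also have "\<dots> = (\<Sum>N\<in>{1..A * B}. (\<Sum>d | d dvd N. f d * g (N div d)) * of_nat N powr z)"
    by (auto simp: sum_distrib_right simp del: of_nat_mult intro!: sum.cong)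
  finally show ?thesis .
qed


section \<open>Truncated exponential series\<close>

lemma norm_exp_minus_partial_sum_le:
  fixes z :: "'a::{real_normed_algebra_1,banach}"
  assumes "c \<ge> 1"
  shows "norm (exp z - (\<Sum>j<N. z ^ j /\<^sub>R fact j)) \<le> exp (c * norm z) / c ^ N"
proof -
  let ?r = "c * norm z"
  have "(\<lambda>j. z ^ (j + N) /\<^sub>R fact (j + N)) sums (exp z - (\<Sum>j<N. z ^ j /\<^sub>R fact j))"
    by (rule sums_split_initial_segment[OF exp_converges])
  moreover have "(\<lambda>j. ?r ^ (j + N) / fact (j + N) / c ^ N) sums
      ((exp ?r - (\<Sum>j<N. ?r ^ j / fact j)) / c ^ N)"
    using sums_divide[OF sums_split_initial_segment[OF exp_converges[of ?r]]]
    by (simp add: divide_inverse mult.commute)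
  moreover have "norm (z ^ (j + N) /\<^sub>R fact (j + N)) \<le> ?r ^ (j + N) / fact (j + N) / c ^ N" for j
  proof -
    have "norm (z ^ (j + N) /\<^sub>R fact (j + N)) \<le> norm z ^ (j + N) / fact (j + N)"
      using divide_right_mono[OF norm_power_ineq[of z "j + N"], of "fact (j + N)"]
      by (simp add: divide_inverse mult.commute)
    also have "\<dots> \<le> c ^ j * norm z ^ (j + N) / fact (j + N)"
      using one_le_power[OF assms, of j] by (intro divide_right_mono) (simp_all add: mult_le_cancel_right1)
    also have "\<dots> = ?r ^ (j + N) / fact (j + N) / c ^ N"
      using assms by (simp add: power_add power_mult_distrib)
    finally show ?thesis .
  qed
  ultimately have "norm (exp z - (\<Sum>j<N. z ^ j /\<^sub>R fact j)) \<le>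
      (exp ?r - (\<Sum>j<N. ?r ^ j / fact j)) / c ^ N"
    by (rule norm_sums_le)
  also have "\<dots> \<le> exp ?r / c ^ N"
    using assms by (intro divide_right_mono) (auto intro!: sum_nonneg)
  finally show ?thesis .
qed

lemma norm_exp_minus_partial_sum_le_exp_neg:
  fixes z :: "'a::{real_normed_algebra_1,banach}"
  assumes "norm z \<le> 2 * a" "real N \<ge> 20 * a"
  shows "norm (exp z - (\<Sum>j<N. z ^ j /\<^sub>R fact j)) \<le> exp (- 25 * a)"
proof -
  have "exp (2::real) = exp 1 ^ 2"
    by (simp flip: exp_of_nat_mult)
  also have "\<dots> \<le> 15 / 2"
    using e_less_272 power_strict_mono[of "exp 1" "272/100::real" 2] by (simp add: power_divide)
  finally have e2: "exp (2::real) \<le> 15 / 2" .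
  have "norm (exp z - (\<Sum>j<N. z ^ j /\<^sub>R fact j)) \<le> exp (exp 2 * norm z) / exp 2 ^ N"
    by (rule norm_exp_minus_partial_sum_le) simp
  also have "\<dots> \<le> exp (15 * a) / exp (40 * a)"
  proof (rule frac_le)
    show "exp (exp 2 * norm z) \<le> exp (15 * a)"
      using mult_mono[OF e2 assms(1)] by simp
    show "exp (40 * a) \<le> exp 2 ^ N"
      using assms(2) by (simp flip: exp_of_nat_mult)
  qed simp_all
  also have "\<dots> = exp (- 25 * a)"
    by (simp flip: exp_diff)
  finally show ?thesis .
qed

lemma exp_eq_one_plus_err_mult_partial_sum:
  fixes z :: complex
  assumes "norm z \<le> 2 * a" "a \<ge> 1" "real N \<ge> 20 * a"
  shows "\<exists>\<epsilon>. norm \<epsilon> \<le> 2 * exp (- 23 * a) \<and> exp z = (1 + \<epsilon>) * (\<Sum>j<N. z ^ j /\<^sub>R fact j)"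
proof -
  define S where "S = (\<Sum>j<N. z ^ j /\<^sub>R fact j)"
  have tail: "norm (exp z - S) \<le> exp (- 23 * a) * exp (- 2 * a)"
    using norm_exp_minus_partial_sum_le_exp_neg[OF assms(1,3)] by (simp add: S_def flip: exp_add)
  have "exp (23 * a) \<ge> 2"
    using exp_ge_add_one_self[of "23 * a"] assms(2) by linarith
  then have small: "exp (- 23 * a) \<le> 1 / 2"
    by (simp add: exp_minus field_simps)
  have "exp (- 2 * a) \<le> norm (exp z)"
    using abs_Re_le_cmod[of z] assms(1) by simp
  also have "\<dots> \<le> norm S + norm (exp z - S)"
    by (rule norm_triangle_sub)
  moreover have "exp (- 23 * a) * exp (- 2 * a) \<le> 1 / 2 * exp (- 2 * a)"
    by (rule mult_right_mono[OF small]) simp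
  ultimately have S_large: "exp (- 2 * a) / 2 \<le> norm S"
    using tail by linarith
  then have "S \<noteq> 0"
    by (metis exp_gt_zero half_gt_zero norm_zero not_le)
  show ?thesis
    unfolding S_def[symmetric]
  proof (intro exI[of _ "(exp z - S) / S"] conjI)
    show "exp z = (1 + (exp z - S) / S) * S"
      using \<open>S \<noteq> 0\<close> by (simp add: field_simps)
    have "norm ((exp z - S) / S) \<le> exp (- 23 * a) * exp (- 2 * a) / (exp (- 2 * a) / 2)"
      unfolding norm_divide using tail S_large by (intro frac_le) auto
    then show "norm ((exp z - S) / S) \<le> 2 * exp (- 23 * a)"
      by simp
  qed
qed


section \<open>Dirichlet coefficients of the powers of F\<close>

definition F_coeff :: "real \<Rightarrow> nat \<Rightarrow> real" where
  "F_coeff X d = (if 2 \<le> d \<and> real d \<le> X then Defs.mangoldt d / ln (real d) else 0)"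

lemma apow_Suc: "apow X (Suc j) n = (\<Sum>d | d dvd n. F_coeff X d * apow X j (n div d))"
  by (simp add: F_coeff_def)

declare apow.simps(2) [simp del]

lemma F_coeff_nonneg: "0 \<le> F_coeff X d"
  by (auto simp: F_coeff_def mangoldt_eq_Prime_Powers_mangoldt intro!: divide_nonneg_nonneg mangoldt_nonneg)

lemma F_coeff_eq_0_if_not_primepow: "\<not> primepow d \<Longrightarrow> F_coeff X d = 0"
  by (simp add: F_coeff_def Defs.mangoldt_def)

lemma F_coeff_eq_0_if_gt: "d > nat \<lfloor>X\<rfloor> \<Longrightarrow> F_coeff X d = 0"
  by (auto simp: F_coeff_def le_nat_floor not_le[symmetric])

lemma F_coeff_mono: "X \<le> Y \<Longrightarrow> F_coeff X d \<le> F_coeff Y d"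
  by (auto simp: F_coeff_def mangoldt_eq_Prime_Powers_mangoldt intro!: divide_nonneg_nonneg mangoldt_nonneg)

lemma apow_nonneg: "0 \<le> apow X j n"
  by (induction j arbitrary: n)
    (auto simp: apow_Suc intro!: sum_nonneg mult_nonneg_nonneg F_coeff_nonneg)

lemma apow_mono: "X \<le> Y \<Longrightarrow> apow X j n \<le> apow Y j n"
proof (induction j arbitrary: n)
  case (Suc j)
  then show ?case
    unfolding apow_Suc by (intro sum_mono mult_mono F_coeff_mono apow_nonneg F_coeff_nonneg)
qed simp

lemma apow_nonzeroD:
  assumes "apow X j n \<noteq> 0"
  shows "n > 0 \<and> j \<le> bigOmega n \<and> n \<le> nat \<lfloor>X\<rfloor> ^ j \<and> (\<forall>p\<in>prime_factors n. real p \<le> X)"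
  using assms
proof (induction j arbitrary: n)
  case (Suc j)
  from Suc.prems obtain d where "d dvd n" and "F_coeff X d * apow X j (n div d) \<noteq> 0"
    unfolding apow_Suc by (elim sum.not_neutral_contains_not_neutral) simp
  then have n_eq: "n = d * (n div d)" and d: "2 \<le> d" "real d \<le> X"
    and nz: "apow X j (n div d) \<noteq> 0"
    by (auto simp: F_coeff_def split: if_splits)
  then have IH: "n div d > 0" "j \<le> bigOmega (n div d)" "n div d \<le> nat \<lfloor>X\<rfloor> ^ j"
    "\<forall>p\<in>prime_factors (n div d). real p \<le> X"
    using Suc.IH by blast+
  have "n > 0"
    using n_eq d IH(1) by (metis mult_pos_pos not_numeral_le_zero not_gr_zero)
  moreover have "Suc j \<le> bigOmega n"
    using bigOmega_mult[of d "n div d"] bigOmega_ge_1[OF d(1)] n_eq d IH(1,2) by simp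
  moreover have "n \<le> nat \<lfloor>X\<rfloor> ^ Suc j"
    using IH(3) n_eq d(2) by (metis le_nat_floor mult_le_mono power_Suc)
  moreover have "\<forall>p\<in>prime_factors n. real p \<le> X"
  proof
    fix p assume p: "p \<in> prime_factors n"
    then have "prime p" "p dvd d \<or> p dvd n div d"
      using n_eq prime_dvd_mult_iff by (metis in_prime_factors_iff)+
    then show "real p \<le> X"
      using d IH(1,4) dvd_imp_le[of p d] by (auto simp: in_prime_factors_iff)
  qed
  ultimately show ?case by blast
qed (auto split: if_splits)

lemma apow_eq_0_if_gt_bigOmega: "j > bigOmega n \<Longrightarrow> apow X j n = 0"
  using apow_nonzeroD[of X j n] by auto

lemma apow_eq_0_if_gt: "n > nat \<lfloor>X\<rfloor> ^ j \<Longrightarrow> apow X j n = 0"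
  using apow_nonzeroD[of X j n] by auto

lemma apow_nonzero_smooth:
  assumes "X \<ge> 1" "real j \<le> W" "apow X j n \<noteq> 0"
  shows "n \<in> smooth_set X \<and> real n \<le> X powr W"
proof -
  have "n > 0" "n \<le> nat \<lfloor>X\<rfloor> ^ j" "\<forall>p\<in>prime_factors n. real p \<le> X"
    using apow_nonzeroD[OF assms(3)] by auto
  moreover have "real (nat \<lfloor>X\<rfloor> ^ j) \<le> X ^ j"
    using assms(1) by (simp add: power_mono)
  moreover have "X ^ j \<le> X powr W"
    using assms(1,2) by (simp add: powr_realpow[symmetric] powr_mono)
  ultimately show ?thesis
    by (auto simp: smooth_set_def simp del: of_nat_power dest!: of_nat_mono[of n])
qed


section \<open>The multiplicative function beta\<close>

definition apow_egf :: "real \<Rightarrow> nat \<Rightarrow> real fps" where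
  "apow_egf X n = Abs_fps (\<lambda>j. apow X j n / fact j)"

lemma apow_egf_nth: "apow_egf X n $ j = apow X j n / fact j"
  by (simp add: apow_egf_def)

lemma fps_deriv_apow_egf:
  "fps_deriv (apow_egf X n) = (\<Sum>d | d dvd n. fps_const (F_coeff X d) * apow_egf X (n div d))"
proof (rule fps_ext)
  fix j
  have "fps_deriv (apow_egf X n) $ j = apow X (Suc j) n / fact j"
    by (simp add: apow_egf_nth field_simps del: of_nat_Suc)
  also have "\<dots> = (\<Sum>d | d dvd n. F_coeff X d * (apow X j (n div d) / fact j))"
    by (simp add: apow_Suc sum_divide_distrib)
  finally show "fps_deriv (apow_egf X n) $ j =
      (\<Sum>d | d dvd n. fps_const (F_coeff X d) * apow_egf X (n div d)) $ j"
    by (simp add: fps_sum_nth apow_egf_nth)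
qed

lemma apow_egf_mult:
  assumes "coprime m1 m2" "m1 > 0" "m2 > 0"
  shows "apow_egf X (m1 * m2) = apow_egf X m1 * apow_egf X m2"
  using assms
proof (induction "m1 * m2" arbitrary: m1 m2 rule: less_induct)
  case less
  let ?E = "apow_egf X" and ?c = "\<lambda>d. fps_const (F_coeff X d)"
  have hyp: "?E (a * b) = ?E a * ?E b"
    if "a * b < m1 * m2" "coprime a b" "a > 0" "b > 0" for a b
    using less.hyps that by blast
  have factor: "?c d * ?E (a * b div d) = ?c d * (?E (a div d) * ?E b)"
    if "d dvd a" "coprime a b" "a > 0" "b > 0" "a * b = m1 * m2" for a b d
  proof (cases "d \<ge> 2")
    case True
    have "a div d < a" "a div d > 0"
      using that True by (auto intro: div_less_dividend dvd_div_eq_0_iff)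
    moreover have "a div d dvd a"
      using that(1) by (metis dvd_mult_div_cancel dvd_triv_right)
    then have "coprime (a div d) b"
      using coprime_divisors[OF _ dvd_refl that(2)] by blast
    moreover have "a div d * b < m1 * m2"
      using \<open>a div d < a\<close> that(4,5) by (metis mult_less_mono1)
    ultimately have "?E (a div d * b) = ?E (a div d) * ?E b"
      using that by (intro hyp) auto
    moreover have "a * b div d = a div d * b"
      using that(1) by (simp add: dvd_div_mult)
    ultimately show ?thesis
      by simp
  qed (simp add: F_coeff_def)
  have left: "?c d * ?E (m1 * m2 div d) = ?c d * ?E (m1 div d) * ?E m2" if "d dvd m1" for d
    using factor[of d m1 m2] that less.prems by (simp add: mult.assoc)
  have right: "?c d * ?E (m1 * m2 div d) = ?E m1 * (?c d * ?E (m2 div d))" if "d dvd m2" for d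
    using factor[of d m2 m1] that less.prems by (simp add: coprime_commute mult.commute mult.left_commute)
  have "fps_deriv (?E (m1 * m2)) = (\<Sum>d | d dvd m1. ?c d * ?E (m1 * m2 div d))
      + (\<Sum>d | d dvd m2. ?c d * ?E (m1 * m2 div d))"
    unfolding fps_deriv_apow_egf
    by (rule sum_divisors_mult_coprime[OF less.prems]) (simp add: F_coeff_eq_0_if_not_primepow)
  also have "\<dots> = fps_deriv (?E m1) * ?E m2 + ?E m1 * fps_deriv (?E m2)"
    by (simp add: left right fps_deriv_apow_egf sum_distrib_left sum_distrib_right)
  finally have "fps_deriv (?E (m1 * m2)) = fps_deriv (?E m1 * ?E m2)"
    by simp
  moreover have "?E (m1 * m2) $ 0 = (?E m1 * ?E m2) $ 0"
    using less.prems by (simp add: apow_egf_nth)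
  ultimately show ?case
    using fps_deriv_eq_iff[of "?E (m1 * m2)" "?E m1 * ?E m2"] by simp
qed

definition beta :: "real \<Rightarrow> real \<Rightarrow> nat \<Rightarrow> real" where
  "beta X k n = (\<Sum>j\<le>bigOmega n. k ^ j / fact j * apow X j n)"

lemma sum_apow_eq_beta:
  assumes "finite J" "{..bigOmega n} \<subseteq> J"
  shows "(\<Sum>j\<in>J. k ^ j / fact j * apow X j n) = beta X k n"
  unfolding beta_def using assms apow_eq_0_if_gt_bigOmega[of n _ X]
  by (intro sum.mono_neutral_right) auto

lemma abs_sum_apow_le_beta:
  assumes "finite J"
  shows "\<bar>\<Sum>j\<in>J. k ^ j / fact j * apow X j n\<bar> \<le> beta X \<bar>k\<bar> n"
proof -
  have "\<bar>\<Sum>j\<in>J. k ^ j / fact j * apow X j n\<bar> \<le> (\<Sum>j\<in>J. \<bar>k\<bar> ^ j / fact j * apow X j n)"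
    using sum_abs[of "\<lambda>j. k ^ j / fact j * apow X j n" J] by (simp add: abs_mult power_abs apow_nonneg)
  also have "\<dots> \<le> (\<Sum>j\<in>J \<union> {..bigOmega n}. \<bar>k\<bar> ^ j / fact j * apow X j n)"
    using assms by (intro sum_mono2) (auto simp: apow_nonneg)
  also have "\<dots> = beta X \<bar>k\<bar> n"
    using assms by (intro sum_apow_eq_beta) auto
  finally show ?thesis .
qed

lemma beta_mono:
  assumes "0 \<le> k" "X \<le> Y"
  shows "beta X k n \<le> beta Y k n"
  unfolding beta_def using assms by (intro sum_mono mult_left_mono apow_mono) auto

lemma beta_mult:
  assumes "coprime m1 m2" "m1 > 0" "m2 > 0"
  shows "beta X k (m1 * m2) = beta X k m1 * beta X k m2"
proof -
  let ?E = "apow_egf X"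
  have beta_eq: "beta X k m = (\<Sum>j\<le>bigOmega m. ?E m $ j * k ^ j)" for m
    unfolding beta_def apow_egf_nth by (simp add: mult_ac)
  have "beta X k m1 * beta X k m2 =
      (\<Sum>r\<le>bigOmega m1 + bigOmega m2. (\<Sum>i\<le>r. ?E m1 $ i * ?E m2 $ (r - i)) * k ^ r)"
    unfolding beta_eq
    by (intro polynomial_product) (simp_all add: apow_egf_nth apow_eq_0_if_gt_bigOmega)
  also have "\<dots> = beta X k (m1 * m2)"
    using assms by (simp add: beta_eq bigOmega_mult apow_egf_mult fps_mult_nth atLeast0AtMost)
  finally show ?thesis ..
qed

lemma multiplicative_beta: "multiplicative_fun (beta X k)"
proof -
  have "beta X k 1 = 1"
    unfolding beta_def bigOmega_1 by simp
  then show ?thesis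
    unfolding multiplicative_fun_def using beta_mult by blast
qed

text \<open>The series -log(1 - x) = sum_m x^m/m, whose coefficients are those of F along the powers
  of a single prime.\<close>

definition fps_neg_ln_1m :: "real fps" where
  "fps_neg_ln_1m = Abs_fps (\<lambda>m. if m = 0 then 0 else 1 / real m)"

lemma F_coeff_prime_power:
  assumes "prime p" "real (p ^ i) \<le> X"
  shows "F_coeff X (p ^ i) = fps_neg_ln_1m $ i"
proof (cases "i = 0")
  case False
  have "2 \<le> p" "p \<le> p ^ i"
    using prime_ge_2_nat[OF assms(1)] False by (auto intro: self_le_power)
  moreover have "ln (real (p ^ i)) = real i * ln (real p)"
    using \<open>2 \<le> p\<close> by (simp add: ln_realpow)
  ultimately show ?thesis
    using assms False by (simp add: F_coeff_def fps_neg_ln_1m_def mangoldt_eq_Prime_Powers_mangoldt)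
qed (simp add: F_coeff_def fps_neg_ln_1m_def)

lemma apow_prime_power:
  assumes p: "prime p" and "real (p ^ m) \<le> X"
  shows "apow X j (p ^ m) = (fps_neg_ln_1m ^ j) $ m"
  using assms(2)
proof (induction j arbitrary: m)
  case 0
  then show ?case
    using p by (auto simp: nat_power_eq_Suc_0_iff dest: prime_gt_1_nat)
next
  case (Suc j)
  have p1: "p > 1"
    using p prime_gt_1_nat by blast
  have divisors: "{d. d dvd p ^ m} = (\<lambda>i. p ^ i) ` {..m}"
    using divides_primepow_nat[OF p] by auto
  have "inj_on (\<lambda>i. p ^ i) {..m}"
    using p1 by (auto simp: inj_on_def power_inject_exp)
  then have "apow X (Suc j) (p ^ m) = (\<Sum>i\<le>m. F_coeff X (p ^ i) * apow X j (p ^ m div p ^ i))"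
    unfolding apow_Suc divisors by (simp add: sum.reindex)
  also have "\<dots> = (\<Sum>i\<le>m. fps_neg_ln_1m $ i * (fps_neg_ln_1m ^ j) $ (m - i))"
  proof (intro sum.cong refl)
    fix i assume "i \<in> {..m}"
    then have "p ^ i \<le> p ^ m" "p ^ (m - i) \<le> p ^ m" "p ^ m div p ^ i = p ^ (m - i)"
      using p1 by (auto intro!: power_increasing simp: power_diff)
    then have "real (p ^ i) \<le> X" "real (p ^ (m - i)) \<le> X" "p ^ m div p ^ i = p ^ (m - i)"
      using Suc.prems of_nat_le_iff order_trans by metis+
    then show "F_coeff X (p ^ i) * apow X j (p ^ m div p ^ i) =
        fps_neg_ln_1m $ i * (fps_neg_ln_1m ^ j) $ (m - i)"
      using Suc.IH F_coeff_prime_power[OF p] by simp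
  qed
  also have "\<dots> = (fps_neg_ln_1m ^ Suc j) $ m"
    by (simp add: fps_mult_nth atLeast0AtMost)
  finally show ?case .
qed

lemma fps_exp_compose_neg_ln_1m_nth:
  "(fps_exp k oo fps_neg_ln_1m) $ m = pochhammer k m / fact m"
proof -
  let ?L = fps_neg_ln_1m
  let ?H = "fps_exp k oo ?L"
  have "fps_deriv ?L = Abs_fps (\<lambda>_. 1)"
    by (rule fps_ext) (simp add: fps_neg_ln_1m_def del: of_nat_Suc)
  moreover have "(1 - fps_X) * Abs_fps (\<lambda>_. 1 :: real) = 1"
    by (rule fps_ext) (simp add: ring_distribs)
  moreover have "fps_deriv ?H = fps_const k * ?H * fps_deriv ?L"
    by (simp add: fps_compose_deriv fps_neg_ln_1m_def fps_const_mult_apply_left)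
  \<comment> \<open>the differential equation of (1 - x) powr (- k)\<close>
  ultimately have ode: "(1 - fps_X) * fps_deriv ?H = fps_const k * ?H"
    by (metis mult.commute mult.right_neutral mult.left_commute)
  have step: "?H $ Suc m = (k + real m) / real (Suc m) * ?H $ m" for m
  proof -
    have "real (Suc m) * ?H $ Suc m - real m * ?H $ m = k * ?H $ m"
      using arg_cong[OF ode, of "\<lambda>f. f $ m"] by (cases m) (simp_all add: ring_distribs)
    then show ?thesis
      by (simp add: field_simps del: of_nat_Suc)
  qed
  show ?thesis
  proof (induction m)
    case 0
    show ?case
      by (simp add: fps_compose_nth fps_neg_ln_1m_def)
  next
    case (Suc m)
    show ?case
      unfolding step Suc.IH by (simp add: pochhammer_Suc field_simps del: of_nat_Suc)
  qed
qed

lemma beta_prime_power: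
  assumes "prime p" "real (p ^ m) \<le> X"
  shows "beta X k (p ^ m) = pochhammer k m / fact m"
proof -
  have "beta X k (p ^ m) = (\<Sum>j\<le>m. k ^ j / fact j * (fps_neg_ln_1m ^ j) $ m)"
    unfolding beta_def bigOmega_prime_power[OF assms(1)] apow_prime_power[OF assms] ..
  also have "\<dots> = (fps_exp k oo fps_neg_ln_1m) $ m"
    by (simp add: fps_compose_nth atLeast0AtMost)
  finally show ?thesis
    by (simp add: fps_exp_compose_neg_ln_1m_nth)
qed

lemma beta_eq_dk:
  assumes "n > 0" "\<forall>p m. prime p \<longrightarrow> m \<ge> 1 \<longrightarrow> p ^ m dvd n \<longrightarrow> real (p ^ m) \<le> X"
  shows "beta X k n = dk k n"
proof -
  have "beta X k (p ^ multiplicity p n) = pochhammer k (multiplicity p n) / fact (multiplicity p n)"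
    if "p \<in> prime_factors n" for p
    using that assms by (intro beta_prime_power)
      (auto simp: prime_factors_multiplicity multiplicity_dvd)
  then show ?thesis
    unfolding multiplicative_fun_eq_prod_prime_factors[OF multiplicative_beta assms(1)] dk_def
    by (rule prod.cong[OF refl])
qed

lemma beta_le_dk:
  assumes "0 \<le> k" "n > 0"
  shows "beta X k n \<le> dk k n"
proof -
  have "beta X k n \<le> beta (max X (real n)) k n"
    using assms(1) by (rule beta_mono) simp
  also have "\<dots> = dk k n"
  proof (intro beta_eq_dk allI impI)
    fix p m assume "p ^ m dvd n"
    then have "real (p ^ m) \<le> real n"
      using assms(2) dvd_imp_le of_nat_le_iff by blast
    then show "real (p ^ m) \<le> max X (real n)"
      by linarith
  qed (rule assms(2))
  finally show ?thesis .
qed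

lemma abs_beta_le_dk: "n > 0 \<Longrightarrow> \<bar>beta X k n\<bar> \<le> dk \<bar>k\<bar> n"
  using abs_sum_apow_le_beta[of "{..bigOmega n}" k X n] beta_le_dk[of "\<bar>k\<bar>" n X]
  by (simp add: beta_def)


section \<open>Expansion of P_X(s)^k as a Dirichlet polynomial\<close>

definition F_dirichlet :: "real \<Rightarrow> complex \<Rightarrow> complex" where
  "F_dirichlet X z = (\<Sum>n\<in>{1..nat \<lfloor>X\<rfloor>}. complex_of_real (F_coeff X n) * of_nat n powr z)"

lemma sum_mangoldt_eq_F_dirichlet:
  "(\<Sum>n\<in>{2..nat \<lfloor>X\<rfloor>}. complex_of_real (Defs.mangoldt n / ln (real n)) * of_nat n powr z) =
    F_dirichlet X z"
proof -
  have "(\<Sum>n\<in>{2..nat \<lfloor>X\<rfloor>}. complex_of_real (Defs.mangoldt n / ln (real n)) * of_nat n powr z) =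
      (\<Sum>n\<in>{2..nat \<lfloor>X\<rfloor>}. complex_of_real (F_coeff X n) * of_nat n powr z)"
  proof (intro sum.cong refl)
    fix n assume "n \<in> {2..nat \<lfloor>X\<rfloor>}"
    then have "2 \<le> n" "real n \<le> X"
      by simp_all linarith
    then show "complex_of_real (Defs.mangoldt n / ln (real n)) * of_nat n powr z =
        complex_of_real (F_coeff X n) * of_nat n powr z"
      by (simp add: F_coeff_def)
  qed
  also have "\<dots> = F_dirichlet X z"
    unfolding F_dirichlet_def by (intro sum.mono_neutral_left) (auto simp: F_coeff_def)
  finally show ?thesis .
qed

lemma Fpoly_eq_F_dirichlet: "Fpoly X t = F_dirichlet X (- (1/2 + \<i> * complex_of_real t))"
  unfolding Fpoly_def by (rule sum_mangoldt_eq_F_dirichlet)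

lemma PXpow_eq_exp_F_dirichlet: "PXpow X k s = exp (complex_of_real k * F_dirichlet X (- s))"
  unfolding PXpow_def sum_mangoldt_eq_F_dirichlet ..

lemma F_dirichlet_power:
  "F_dirichlet X z ^ j = (\<Sum>n\<in>{1..nat \<lfloor>X\<rfloor> ^ j}. complex_of_real (apow X j n) * of_nat n powr z)"
proof (induction j)
  case 0
  then show ?case
    by (simp add: powr_def)
next
  case (Suc j)
  have "F_dirichlet X z ^ Suc j = (\<Sum>N\<in>{1..nat \<lfloor>X\<rfloor> * nat \<lfloor>X\<rfloor> ^ j}.
      (\<Sum>d | d dvd N. complex_of_real (F_coeff X d) * complex_of_real (apow X j (N div d))) *
      of_nat N powr z)"
    unfolding power_Suc Suc.IH unfolding F_dirichlet_def
    by (rule dirichlet_poly_mult) (auto simp: F_coeff_eq_0_if_gt apow_eq_0_if_gt)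
  then show ?case
    by (simp add: apow_Suc)
qed

lemma F_dirichlet_power_smooth:
  assumes "X \<ge> 1" "real j \<le> W"
  shows "F_dirichlet X z ^ j =
    (\<Sum>n\<in>{n \<in> smooth_set X. real n \<le> X powr W}. complex_of_real (apow X j n) * of_nat n powr z)"
  unfolding F_dirichlet_power
proof (rule sum.same_carrier[THEN iffD2])
  let ?S = "{n \<in> smooth_set X. real n \<le> X powr W}"
  show "finite ({1..nat \<lfloor>X\<rfloor> ^ j} \<union> ?S)"
    by (simp add: finite_smooth_set_le)
  show "complex_of_real (apow X j n) * of_nat n powr z = 0"
    if "n \<in> ({1..nat \<lfloor>X\<rfloor> ^ j} \<union> ?S) - {1..nat \<lfloor>X\<rfloor> ^ j}" for n
    using that by (auto simp: smooth_set_def apow_eq_0_if_gt)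
  show "complex_of_real (apow X j n) * of_nat n powr z = 0"
    if "n \<in> ({1..nat \<lfloor>X\<rfloor> ^ j} \<union> ?S) - ?S" for n
    using that apow_nonzero_smooth[OF assms] by auto
qed auto

lemma Dpoly_eq_sum_alpha:
  assumes "X \<ge> 1"
  shows "Dpoly X k T t = (\<Sum>n\<in>{n\<in>smooth_set X. real n \<le> X powr W0 k T}.
    complex_of_real (alpha X k T n) * (of_nat n) powr (- (1/2 + \<i> * complex_of_real t)))"
proof -
  let ?z = "- (1/2 + \<i> * complex_of_real t)"
  let ?S = "{n\<in>smooth_set X. real n \<le> X powr W0 k T}"
  let ?J = "{j::nat. real j \<le> W0 k T}"
  have "Dpoly X k T t = (\<Sum>j\<in>?J. complex_of_real (k ^ j / fact j) *
      (\<Sum>n\<in>?S. complex_of_real (apow X j n) * of_nat n powr ?z))"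
    unfolding Dpoly_def Fpoly_eq_F_dirichlet
    by (intro sum.cong refl) (simp add: F_dirichlet_power_smooth[OF assms])
  also have "\<dots> = (\<Sum>n\<in>?S. \<Sum>j\<in>?J. complex_of_real (k ^ j / fact j * apow X j n) * of_nat n powr ?z)"
    by (subst sum.swap) (simp add: sum_distrib_left mult.assoc)
  also have "\<dots> = (\<Sum>n\<in>?S. complex_of_real (alpha X k T n) * of_nat n powr ?z)"
    by (simp add: alpha_def sum_distrib_right)
  finally show ?thesis .
qed

lemma alpha_nonzero_smooth:
  assumes "X \<ge> 1" "alpha X k T n \<noteq> 0"
  shows "n \<in> smooth_set X \<and> real n \<le> X powr W0 k T"
proof -
  obtain j where "real j \<le> W0 k T" "apow X j n \<noteq> 0"
    using assms(2) unfolding alpha_def by (auto elim: sum.not_neutral_contains_not_neutral)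
  then show ?thesis
    using apow_nonzero_smooth[OF assms(1)] by blast
qed

lemma alpha_eq_beta: "real (bigOmega n) \<le> W0 k T \<Longrightarrow> alpha X k T n = beta X k n"
  unfolding alpha_def by (intro sum_apow_eq_beta finite_nat_set_le) auto

lemma abs_alpha_le_dk: "n > 0 \<Longrightarrow> \<bar>alpha X k T n\<bar> \<le> dk \<bar>k\<bar> n"
  using abs_sum_apow_le_beta[OF finite_nat_set_le] beta_le_dk[of "\<bar>k\<bar>" n X]
  unfolding alpha_def by (meson abs_ge_zero order_trans)

lemma norm_Fpoly_le: "t \<in> Sset X T \<Longrightarrow> norm (Fpoly X t) \<le> 2 * V0 T"
  using cmod_le[of "Fpoly X t"] by (simp add: Sset_def)

lemma Dpoly_eq_exp_partial_sum:
  assumes "W0 k T \<ge> 0"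
  shows "Dpoly X k T t =
    (\<Sum>j<nat \<lfloor>W0 k T\<rfloor> + 1. (complex_of_real k * Fpoly X t) ^ j /\<^sub>R fact j)"
  unfolding Dpoly_def nat_set_le_eq_lessThan[OF assms]
  by (simp add: scaleR_conv_of_real power_mult_distrib divide_inverse mult_ac)

lemma PXpow_eq_one_plus_err_mult_Dpoly:
  assumes t: "t \<in> Sset X T" and large: "k = 0 \<or> 1 \<le> \<bar>k\<bar> * V0 T"
  shows "\<exists>\<epsilon>. norm \<epsilon> \<le> 2 * exp (- 19 * \<bar>k\<bar> * V0 T) \<and>
    PXpow X k (1/2 + \<i> * complex_of_real t) = (1 + \<epsilon>) * Dpoly X k T t"
proof -
  let ?z = "complex_of_real k * Fpoly X t"
  define a where "a = \<bar>k\<bar> * V0 T"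
  have W0_eq: "W0 k T = 20 * a"
    by (simp add: W0_def a_def)
  have "a \<ge> 0"
    using large by (auto simp: a_def)
  then have D: "Dpoly X k T t = (\<Sum>j<nat \<lfloor>20 * a\<rfloor> + 1. ?z ^ j /\<^sub>R fact j)"
    using Dpoly_eq_exp_partial_sum[of k T X t] by (simp add: W0_eq)
  have P: "PXpow X k (1/2 + \<i> * complex_of_real t) = exp ?z"
    by (simp add: PXpow_eq_exp_F_dirichlet Fpoly_eq_F_dirichlet)
  show ?thesis
  proof (cases "k = 0")
    case True
    then show ?thesis
      using P D by (intro exI[of _ 0]) (simp add: a_def)
  next
    case False
    then have a: "a \<ge> 1"
      using large by (simp add: a_def)
    have "norm ?z \<le> \<bar>k\<bar> * (2 * V0 T)"
      unfolding norm_mult norm_of_real using norm_Fpoly_le[OF t] by (intro mult_left_mono) auto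
    then have "norm ?z \<le> 2 * a"
      by (simp add: a_def)
    moreover have "real (nat \<lfloor>20 * a\<rfloor> + 1) \<ge> 20 * a"
      by linarith
    ultimately obtain \<epsilon> where \<epsilon>: "norm \<epsilon> \<le> 2 * exp (- 23 * a)"
        "exp ?z = (1 + \<epsilon>) * (\<Sum>j<nat \<lfloor>20 * a\<rfloor> + 1. ?z ^ j /\<^sub>R fact j)"
      using exp_eq_one_plus_err_mult_partial_sum a by blast
    have "exp (- 23 * a) \<le> exp (- 19 * a)"
      using a by simp
    moreover have "exp (- 19 * \<bar>k\<bar> * V0 T) = exp (- 19 * a)"
      by (simp add: a_def mult.assoc)
    ultimately have "norm \<epsilon> \<le> 2 * exp (- 19 * \<bar>k\<bar> * V0 T)"
      using \<epsilon>(1) by linarith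
    then show ?thesis
      using \<epsilon>(2) P D by auto
  qed
qed

theorem lemma5:
  fixes k :: real
  shows "\<exists>C T0 X0. \<forall>T X t. T \<ge> T0 \<longrightarrow> X \<ge> X0 \<longrightarrow> t \<in> Sset X T \<longrightarrow>
     (\<exists>\<epsilon>. norm \<epsilon> \<le> C * exp (- 19 * \<bar>k\<bar> * V0 T) \<and>
          PXpow X k (1/2 + \<i> * complex_of_real t) = (1 + \<epsilon>) * Dpoly X k T t)
   \<and> Dpoly X k T t = (\<Sum>n\<in>{n\<in>smooth_set X. real n \<le> X powr W0 k T}.
          complex_of_real (alpha X k T n) * (of_nat n) powr (- (1/2 + \<i> * complex_of_real t)))
   \<and> (\<forall>n. alpha X k T n \<noteq> 0 \<longrightarrow> n \<in> smooth_set X \<and> real n \<le> X powr W0 k T)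
   \<and> (\<forall>n>0. \<bar>alpha X k T n\<bar> \<le> dk \<bar>k\<bar> n)
   \<and> (\<exists>\<beta>. multiplicative_fun \<beta>
        \<and> (\<forall>n>0. real (bigOmega n) \<le> W0 k T \<longrightarrow> alpha X k T n = \<beta> n)
        \<and> (\<forall>n>0. (\<forall>p m. prime p \<longrightarrow> m \<ge> 1 \<longrightarrow> p ^ m dvd n \<longrightarrow> real (p ^ m) \<le> X) \<longrightarrow> \<beta> n = dk k n)
        \<and> (\<forall>n>0. \<bar>\<beta> n\<bar> \<le> dk \<bar>k\<bar> n))"
proof -
  define B where "B = max 1 (1 / \<bar>k\<bar>)"
  have large: "k = 0 \<or> 1 \<le> \<bar>k\<bar> * V0 T" if "T \<ge> exp (exp (exp B))" for T
  proof -
    have "V0 T \<ge> B"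
      using that by (intro V0_ge) (simp add: B_def)
    then show ?thesis
      unfolding B_def by (auto simp: divide_le_eq mult.commute split: if_splits)
  qed
  show ?thesis
  proof (rule exI[of _ 2], rule exI[of _ "exp (exp (exp B))"], rule exI[of _ 1],
      intro allI impI, goal_cases)
    case (1 T X t)
    show ?case
      using PXpow_eq_one_plus_err_mult_Dpoly[OF 1(3) large[OF 1(1)]] Dpoly_eq_sum_alpha[OF 1(2)]
        alpha_nonzero_smooth[OF 1(2)] abs_alpha_le_dk[of _ X k T] multiplicative_beta[of X k]
        alpha_eq_beta[of _ k T X] beta_eq_dk[of _ X k] abs_beta_le_dk[of _ X k]
      by (intro conjI exI[of _ "beta X k"] allI impI) blast+
  qed
qed

end
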